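(* Let $e\geqslant 1$ and $b\geqslant 2$ be integers. Suppose that $e\not\equiv 1\pmod{p-1}$ for every prime divisor $p$ of $b-1$. Then for every positive integer $m$ there exists an integer $l>0$ such that $l+1,l+2,\ldots,l+m$ are all $(e,b)$-happy.
   Context: For integers $e\geqslant 1$, $b\geqslant 2$ and a positive integer $n=\sum_{j=0}^k a_j b^j$ with $0\leqslant a_j<b$, define $T_{e,b}(n)=\sum_{j=0}^k a_j^e$ (the sum of the $e$-th powers of the base-$b$ digits of $n$). $T_{e,b}^r$ denotes the $r$-th iterate of $T_{e,b}$, with $T_{e,b}^0(n)=n$. A positive integer $n$ is called $(e,b)$-happy if $T_{e,b}^r(n)=1$ for some $r\geqslant 0$. *)

theory Defs
  imports "HOL-Number_Theory.Number_Theory"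
begin

fun T :: "nat \<Rightarrow> nat \<Rightarrow> nat \<Rightarrow> nat" where
  "T e b n = (if n = 0 \<or> b < 2 then 0 else (n mod b) ^ e + T e b (n div b))"

definition happy :: "nat \<Rightarrow> nat \<Rightarrow> nat \<Rightarrow> bool" where
  "happy e b n \<longleftrightarrow> n > 0 \<and> (\<exists>r. (T e b ^^ r) n = 1)"

end

(*
  Call M > 0 a happy translate of a finite set C if M + c is happy for all c in C.
  If {T (c + M) | c in C} has a happy translate M', then so has C: write M' ones in front
  of the digits of c + M. Call u and v coalescent if finitely many maps x -> T (x + M) send
  them to the same number; applying these maps to C until two elements merge lowers the
  cardinality, so by induction it suffices that any two numbers are coalescent.

  Choosing digit blocks, v and v + q (b - 1) coalesce because T takes the same value at
  v b^k + q and at v b^k + q b, hence w and w + N coalesce whenever b - 1 divides T N, and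
  u and u + d coalesce as soon as T (b^K - d) = N + 1 for such an N. The latter reduces to
  showing that T z - z takes every residue modulo b - 1. These residues form an additive
  monoid containing delta^e - delta for every digit delta, and for a prime p dividing b - 1
  a primitive root modulo p is a digit with p not dividing delta^e - delta unless
  e = 1 (mod p - 1).
*)

theory Submission
  imports Defs
begin

declare T.simps [simp del]

lemma prime_exists_power_not_cong_self:
  fixes p e :: nat
  assumes "prime p" and "\<not> [e = 1] (mod (p - 1))"
  shows "\<exists>\<delta>\<in>{1..<p}. \<not> [\<delta> ^ e = \<delta>] (mod p)"
proof -
  obtain g where "residue_primroot p g"
    using prime_primitive_root_exists prime_gt_1_nat assms(1) by blast
  define \<delta> where "\<delta> = g mod p"
  have "residue_primroot p \<delta>" unfolding \<delta>_def using \<open>residue_primroot p g\<close> by simp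
  then have cop: "coprime p \<delta>" and ord: "ord p \<delta> = p - 1"
    using assms(1) by (auto simp: residue_primroot_def totient_prime)
  have "\<delta> \<noteq> 0" using cop assms(1) by (metis coprime_0_right_iff not_prime_unit)
  moreover have "\<delta> < p" unfolding \<delta>_def using assms(1) prime_gt_0_nat by simp
  moreover have "\<not> [\<delta> ^ e = \<delta> ^ 1] (mod p)"
    using order_divides_expdiff[OF cop, of e 1] ord assms(2) by simp
  ultimately show ?thesis by auto
qed

lemma additive_cong_closed_eq_UNIV:
  fixes S :: "int set" and n :: int
  assumes "n > 0" and "0 \<in> S"
    and add_closed: "\<And>i j. i \<in> S \<Longrightarrow> j \<in> S \<Longrightarrow> i + j \<in> S"
    and cong_closed: "\<And>i j. i \<in> S \<Longrightarrow> [i = j] (mod n) \<Longrightarrow> j \<in> S"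
    and not_dvd: "\<And>p::nat. prime p \<Longrightarrow> int p dvd n \<Longrightarrow> \<exists>i\<in>S. \<not> int p dvd i"
  shows "S = UNIV"
proof -
  have nat_mult_closed: "int k * i \<in> S" if "i \<in> S" for k i
    by (induction k) (use \<open>0 \<in> S\<close> add_closed that in \<open>simp_all add: algebra_simps\<close>)
  have mult_closed: "k * i \<in> S" if "i \<in> S" for k i
  proof -
    have "int (nat (k mod n)) * i \<in> S" using nat_mult_closed that .
    moreover have "[int (nat (k mod n)) * i = k * i] (mod n)"
      using \<open>n > 0\<close> by (intro cong_mult cong_refl) (simp add: cong_def)
    ultimately show ?thesis using cong_closed by blast
  qed
  have "n \<in> S" using cong_closed[OF \<open>0 \<in> S\<close>] by (simp add: cong_def)
  then have "\<exists>k::nat. 0 < k \<and> int k \<in> S" using \<open>n > 0\<close> by (intro exI[of _ "nat n"]) simp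
  then obtain g :: nat where g: "0 < g" "int g \<in> S"
    and g_min: "\<And>h. h < g \<Longrightarrow> \<not> (0 < h \<and> int h \<in> S)"
    unfolding exists_least_iff[of "\<lambda>k. 0 < k \<and> int k \<in> S"] by blast
  have g_dvd: "int g dvd i" if "i \<in> S" for i
  proof -
    have "i + (- (i div int g)) * int g \<in> S" using add_closed[OF that mult_closed[OF g(2)]] .
    then have "i mod int g \<in> S" by (simp add: minus_div_mult_eq_mod[symmetric])
    moreover have "0 \<le> i mod int g" "i mod int g < int g" using g(1) by simp_all
    ultimately have "i mod int g = 0" using g_min[of "nat (i mod int g)"] by fastforce
    then show ?thesis by (simp add: dvd_eq_mod_eq_0)
  qed
  have "g = 1"
  proof (rule ccontr)
    assume "g \<noteq> 1"
    then obtain p where p: "prime p" "p dvd g" using prime_factor_nat by blast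
    then have "int p dvd n" using g_dvd[OF \<open>n \<in> S\<close>] by (meson dvd_trans int_dvd_int_iff)
    then obtain i where "i \<in> S" "\<not> int p dvd i" using not_dvd p(1) by blast
    then show False using g_dvd p(2) by (meson dvd_trans int_dvd_int_iff)
  qed
  then show ?thesis using mult_closed[of 1] g(2) by (metis UNIV_eq_I mult.right_neutral of_nat_1)
qed

primrec repunit :: "nat \<Rightarrow> nat \<Rightarrow> nat" where
  "repunit b 0 = 0"
| "repunit b (Suc k) = repunit b k * b + 1"

locale digit_power_sum =
  fixes e b :: nat
  assumes exponent_pos: "e \<ge> 1" and base_ge_2: "b \<ge> 2"
begin

lemma less_base_power: "n < b ^ n"
proof -
  have "n < 2 ^ n" by (rule less_exp)
  also have "\<dots> \<le> b ^ n" using base_ge_2 by (simp add: power_mono)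
  finally show ?thesis .
qed

lemma le_mult_base_power: "n \<le> n * b ^ k"
  using mult_le_mono2[of 1 "b ^ k" n] base_ge_2 by simp

lemma T_zero [simp]: "T e b 0 = 0"
  by (simp add: T.simps)

lemma T_mult_base_add: "r < b \<Longrightarrow> T e b (w * b + r) = r ^ e + T e b w"
  using exponent_pos base_ge_2 by (cases "w * b + r = 0") (auto simp: T.simps[of e b "w * b + r"])

lemma T_digit: "r < b \<Longrightarrow> T e b r = r ^ e"
  using T_mult_base_add[of r 0] by simp

lemma T_one [simp]: "T e b 1 = 1"
  using T_digit[of 1] base_ge_2 by simp

lemma T_concat: "y < b ^ k \<Longrightarrow> T e b (z * b ^ k + y) = T e b z + T e b y"
proof (induction k arbitrary: y)
  case (Suc k)
  have b: "0 < b" using base_ge_2 by simp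
  have "y div b < b ^ k" using Suc.prems b by (simp add: div_less_iff_less_mult mult.commute)
  moreover have "z * b ^ Suc k + y = (z * b ^ k + y div b) * b + y mod b"
    by (simp add: algebra_simps)
  ultimately show ?case
    using Suc.IH T_mult_base_add[of "y mod b" "y div b"] T_mult_base_add[of "y mod b"] b by simp
qed simp

lemma T_mult_base_power: "T e b (z * b ^ k) = T e b z"
  using T_concat[of 0 k z] base_ge_2 by simp

lemma T_base_power: "T e b (b ^ k) = 1"
  by (metis T_mult_base_power T_one mult_1)

lemma T_base_power_minus_1: "T e b (b ^ k - 1) = k * (b - 1) ^ e"
proof (induction k)
  case (Suc k)
  have "b ^ Suc k - 1 = (b ^ k - 1) * b + (b - 1)"
    using base_ge_2 by (simp add: algebra_simps diff_mult_distrib)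
  then show ?case using T_mult_base_add[of "b - 1" "b ^ k - 1"] Suc.IH base_ge_2 by simp
qed simp

lemma T_base_power_add_minus:
  assumes "0 < d"
  shows "T e b (b ^ (d + j) - d) = j * (b - 1) ^ e + T e b (b ^ d - d)"
proof -
  have "d < b ^ d" by (rule less_base_power)
  moreover have "b ^ d \<le> b ^ j * b ^ d" using base_ge_2 by simp
  ultimately have "(b ^ j - 1) * b ^ d + (b ^ d - d) = b ^ j * b ^ d - d"
    by (simp add: diff_mult_distrib)
  then have "b ^ (d + j) - d = (b ^ j - 1) * b ^ d + (b ^ d - d)"
    by (simp add: power_add mult.commute)
  moreover have "b ^ d - d < b ^ d" using \<open>d < b ^ d\<close> assms by simp
  ultimately show ?thesis using T_concat T_base_power_minus_1 by simp
qed

lemma T_pos: "0 < n \<Longrightarrow> 0 < T e b n"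
proof (induction n rule: less_induct)
  case (less n)
  have "T e b n = (n mod b) ^ e + T e b (n div b)"
    using T_mult_base_add[of "n mod b" "n div b"] base_ge_2 by simp
  moreover have "n div b < n" "0 < n div b" if "n mod b = 0"
    using that less.prems base_ge_2 by (auto simp: dvd_imp_le mod_eq_0_iff_dvd)
  ultimately show ?case using less.IH by (cases "n mod b = 0") auto
qed

lemma T_repunit: "T e b (repunit b k) = k"
  by (induction k) (use T_mult_base_add[of 1] base_ge_2 in simp_all)

lemma happy_if_happy_T:
  assumes "0 < n" and "happy e b (T e b n)"
  shows "happy e b n"
proof -
  obtain r where "(T e b ^^ r) (T e b n) = 1" using assms(2) unfolding happy_def by blast
  then have "(T e b ^^ Suc r) n = 1" by (simp add: funpow_Suc_right del: funpow.simps)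
  then show ?thesis using assms(1) unfolding happy_def by blast
qed

definition has_happy_translate :: "nat set \<Rightarrow> bool" where
  "has_happy_translate C \<longleftrightarrow> (\<exists>M>0. \<forall>c\<in>C. happy e b (M + c))"

lemma has_happy_translate_card_le_1:
  assumes "finite C" and "card C \<le> 1"
  shows "has_happy_translate C"
proof -
  obtain c where "C \<subseteq> {c}"
    using assms by (cases "C = {}") (auto simp: card_le_Suc0_iff_eq)
  have "c < b ^ c" by (rule less_base_power)
  have "happy e b 1" unfolding happy_def by (auto intro: exI[of _ 0])
  then have "happy e b (b ^ c)" using happy_if_happy_T[of "b ^ c"] T_base_power base_ge_2 by simp
  then show ?thesis unfolding has_happy_translate_def
    using \<open>C \<subseteq> {c}\<close> \<open>c < b ^ c\<close> by (intro exI[of _ "b ^ c - c"]) auto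
qed

lemma has_happy_translate_if_image:
  assumes "finite C" and "has_happy_translate ((\<lambda>c. T e b (c + M)) ` C)"
  shows "has_happy_translate C"
proof -
  obtain M' where "M' > 0" and happy_M': "\<forall>c\<in>C. happy e b (M' + T e b (c + M))"
    using assms(2) unfolding has_happy_translate_def by auto
  define k where "k = Max (insert 0 ((\<lambda>c. c + M) ` C))"
  define N where "N = repunit b M' * b ^ k + M"
  have "c + M < b ^ k" if "c \<in> C" for c
  proof -
    have "c + M \<le> k" unfolding k_def using assms(1) that by (intro Max_ge) auto
    then show ?thesis using less_base_power[of k] by linarith
  qed
  then have "T e b (N + c) = M' + T e b (c + M)" if "c \<in> C" for c
    using that T_concat T_repunit unfolding N_def by (metis add.assoc add.commute)
  moreover have "N > 0" unfolding N_def using \<open>M' > 0\<close> base_ge_2 by (cases M') auto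
  ultimately show ?thesis
    unfolding has_happy_translate_def using happy_M' happy_if_happy_T by auto
qed

inductive coalescent :: "nat \<Rightarrow> nat \<Rightarrow> bool" where
  refl: "coalescent u u"
| shift: "coalescent (T e b (u + M)) (T e b (v + M)) \<Longrightarrow> coalescent u v"

lemma coalescent_sym: "coalescent u v \<Longrightarrow> coalescent v u"
  by (induction rule: coalescent.induct) (auto intro: coalescent.intros)

lemma coalescent_add_if_coalescent_T:
  assumes "u \<le> x" and "coalescent (T e b x) (T e b (x + d))"
  shows "coalescent u (u + d)"
proof -
  have shift_eqs: "u + (x - u) = x" "u + d + (x - u) = x + d" using assms(1) by simp_all
  have "coalescent (T e b (u + (x - u))) (T e b (u + d + (x - u)))"
    unfolding shift_eqs by (fact assms(2))
  then show ?thesis by (rule coalescent.shift)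
qed

lemma has_happy_translate_if_coalescent:
  assumes "coalescent u v" and "finite C" and "u \<in> C" and "v \<in> C" and "u \<noteq> v"
    and "\<And>C'. finite C' \<Longrightarrow> card C' < card C \<Longrightarrow> has_happy_translate C'"
  shows "has_happy_translate C"
  using assms
proof (induction arbitrary: C rule: coalescent.induct)
  case (refl u)
  then show ?case by simp
next
  case (shift u M v)
  define C' where "C' = (\<lambda>c. T e b (c + M)) ` C"
  have "finite C'" and card_le: "card C' \<le> card C"
    unfolding C'_def using shift.prems(1) by (simp_all add: card_image_le)
  have "has_happy_translate C'"
  proof (cases "T e b (u + M) = T e b (v + M)")
    case True
    then have "\<not> inj_on (\<lambda>c. T e b (c + M)) C" using shift.prems unfolding inj_on_def by blast
    then have "card C' < card C"
      using card_le shift.prems(1) unfolding C'_def by (metis inj_on_iff_eq_card le_neq_implies_less)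
    then show ?thesis using shift.prems(5) \<open>finite C'\<close> by blast
  next
    case False
    show ?thesis
      by (rule shift.IH) (use \<open>finite C'\<close> False shift.prems card_le in \<open>auto simp: C'_def\<close>)
  qed
  then show ?case using has_happy_translate_if_image shift.prems(1) unfolding C'_def by blast
qed

lemma coalescent_add_mult_pred: "coalescent v (v + q * (b - 1))"
proof -
  define x where "x = v * b ^ (q * b) + q"
  have "q * b < b ^ (q * b)" by (rule less_base_power)
  moreover have "q \<le> q * b" using base_ge_2 by simp
  ultimately have "q < b ^ (q * b)" by linarith
  have "q + q * (b - 1) = q * b" using base_ge_2 by (cases b) simp_all
  then have "T e b (x + q * (b - 1)) = T e b (v * b ^ (q * b) + q * b)"
    unfolding x_def by (simp only: add.assoc)
  also have "\<dots> = T e b v + T e b q"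
    using T_concat[OF \<open>q * b < b ^ (q * b)\<close>] T_mult_base_power[of q 1] by simp
  also have "\<dots> = T e b x"
    unfolding x_def using T_concat[OF \<open>q < b ^ (q * b)\<close>] by simp
  finally have "T e b (x + q * (b - 1)) = T e b x" .
  moreover have "v \<le> x" unfolding x_def using le_mult_base_power trans_le_add1 by blast
  ultimately show ?thesis using coalescent_add_if_coalescent_T coalescent.refl by metis
qed

lemma coalescent_add_if_dvd_T:
  assumes "(b - 1) dvd T e b N"
  shows "coalescent w (w + N)"
proof -
  obtain q where q: "T e b N = q * (b - 1)" using assms by (metis dvd_def mult.commute)
  define x where "x = w * b ^ N"
  have "T e b x = T e b w" unfolding x_def by (rule T_mult_base_power)
  moreover have "T e b (x + N) = T e b w + q * (b - 1)"
    unfolding x_def using T_concat less_base_power q by simp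
  moreover have "w \<le> x" unfolding x_def by (rule le_mult_base_power)
  ultimately show ?thesis using coalescent_add_if_coalescent_T coalescent_add_mult_pred by metis
qed

definition T_excess :: "int set" where
  "T_excess = {i. \<exists>z. [int (T e b z) - int z = i] (mod int (b - 1))}"

lemma T_excess_add:
  assumes "i \<in> T_excess" and "j \<in> T_excess"
  shows "i + j \<in> T_excess"
proof -
  obtain x y where x: "[int (T e b x) - int x = i] (mod int (b - 1))"
    and y: "[int (T e b y) - int y = j] (mod int (b - 1))"
    using assms unfolding T_excess_def by blast
  define z where "z = y * b ^ x + x"
  have "T e b z = T e b y + T e b x" unfolding z_def using T_concat less_base_power by simp
  moreover have "[b ^ x = 1] (mod (b - 1))"
    using cong_pow[of b 1 "b - 1" x] base_ge_2 by (simp add: cong_altdef_nat)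
  then have "[z = y * 1 + x] (mod (b - 1))" unfolding z_def by (intro cong_add cong_mult cong_refl)
  then have "[int z = int y + int x] (mod int (b - 1))"
    using cong_int_iff[of z "y * 1 + x" "b - 1"] by simp
  ultimately have "[int (T e b z) - int z = (int (T e b y) - int y) + (int (T e b x) - int x)]
      (mod int (b - 1))"
    using cong_diff[OF cong_refl[of "int (T e b z)"]] by (simp add: algebra_simps)
  also have "[(int (T e b y) - int y) + (int (T e b x) - int x) = j + i] (mod int (b - 1))"
    by (rule cong_add[OF y x])
  finally show ?thesis unfolding T_excess_def by (auto simp: add.commute)
qed

lemma digit_power_minus_in_T_excess:
  assumes "\<delta> < b"
  shows "int (\<delta> ^ e) - int \<delta> \<in> T_excess"
  using T_digit[OF assms] unfolding T_excess_def by (auto intro!: exI[of _ \<delta>])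

lemma exists_T_add_cong:
  assumes "coprime b k"
  shows "\<exists>z'. [z' = z + m] (mod k) \<and> T e b z' = T e b z + m"
proof (induction m)
  case (Suc m)
  then obtain z' where z': "[z' = z + m] (mod k)" "T e b z' = T e b z + m" by blast
  have "k > 0" using assms base_ge_2 by (cases "k = 0") auto
  \<comment> \<open>A leading digit \<open>1\<close> at position \<open>L\<close> adds \<open>1\<close> both to \<open>T\<close> and,
    as \<open>[b ^ L = 1] (mod k)\<close>, to the residue modulo \<open>k\<close>.\<close>
  define L where "L = totient k * z'"
  have "z' \<le> L" unfolding L_def using \<open>k > 0\<close> by (simp add: Suc_le_eq)
  then have "b ^ z' \<le> b ^ L" using base_ge_2 by (simp add: power_increasing)
  then have "z' < b ^ L" using less_base_power[of z'] by linarith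
  then have "T e b (1 * b ^ L + z') = T e b z' + 1"
    using T_concat[of z' L 1] by (simp only: T_one add.commute)
  then have "T e b (1 * b ^ L + z') = T e b z + Suc m" using z'(2) by simp
  moreover have "[b ^ L = 1] (mod k)"
    using cong_pow[OF euler_theorem[of b k], of z'] assms by (simp add: L_def power_mult)
  then have "[1 * b ^ L + z' = z + Suc m] (mod k)"
    using cong_add[OF \<open>[b ^ L = 1] (mod k)\<close> z'(1)] by simp
  ultimately show ?case by blast
qed (auto intro: cong_refl)

context
  assumes exponent_cond: "\<forall>p. prime p \<and> p dvd (b - 1) \<longrightarrow> \<not> [e = 1] (mod (p - 1))"
begin

lemma T_excess_eq_UNIV: "T_excess = UNIV"
proof (rule additive_cong_closed_eq_UNIV)
  show "0 \<in> T_excess" unfolding T_excess_def by (auto intro!: exI[of _ 0])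
next
  fix p :: nat
  assume "prime p" and "int p dvd int (b - 1)"
  then have "p dvd b - 1" by simp
  then obtain \<delta> where "\<delta> \<in> {1..<p}" and not_cong: "\<not> [\<delta> ^ e = \<delta>] (mod p)"
    using prime_exists_power_not_cong_self \<open>prime p\<close> exponent_cond by blast
  moreover have "p \<le> b - 1" using \<open>p dvd b - 1\<close> base_ge_2 by (simp add: dvd_imp_le)
  ultimately have "int (\<delta> ^ e) - int \<delta> \<in> T_excess" by (intro digit_power_minus_in_T_excess) auto
  moreover have "\<not> int p dvd int (\<delta> ^ e) - int \<delta>"
    using not_cong by (simp add: cong_int_iff[symmetric] cong_iff_dvd_diff)
  ultimately show "\<exists>i\<in>T_excess. \<not> int p dvd i" by blast
qed (use base_ge_2 T_excess_add in \<open>auto simp: T_excess_def intro: cong_trans\<close>)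

lemma exists_T_dvd_pred: "\<exists>j. (b - 1) dvd T e b (j * (b - 1) ^ e + c)"
proof -
  define n where "n = b - 1"
  have "- int (T e b c) \<in> T_excess" using T_excess_eq_UNIV by simp
  then obtain z0 where z0: "[int (T e b z0) - int z0 = - int (T e b c)] (mod int n)"
    unfolding T_excess_def n_def by blast
  define m where "m = (n ^ e - 1) * z0"
  have "coprime b (n ^ e)" unfolding n_def using base_ge_2 coprime_Suc_left_nat[of "b - 1"] by simp
  then obtain z where z: "[z = z0 + m] (mod n ^ e)" and Tz: "T e b z = T e b z0 + m"
    using exists_T_add_cong by blast
  have "z0 + m = n ^ e * z0" unfolding m_def using base_ge_2 by (simp add: n_def algebra_simps)
  then have "n ^ e dvd z" using z by (simp add: cong_dvd_iff)
  then obtain k where k: "z = n ^ e * k" by (rule dvdE)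
  have "n dvd n ^ e" using exponent_pos by (simp add: dvd_power)
  then have "int n dvd int z" using \<open>n ^ e dvd z\<close> by (simp add: dvd_trans)
  moreover have "[z = z0 + m] (mod n)" using z \<open>n dvd n ^ e\<close> by (rule cong_dvd_modulus_nat)
  then have "int n dvd int z - int z0 - int m"
    by (simp add: cong_int_iff[symmetric] cong_iff_dvd_diff algebra_simps)
  moreover have "int n dvd int (T e b c) + int (T e b z0) - int z0"
    using z0 by (simp add: cong_iff_dvd_diff algebra_simps)
  moreover have "int (T e b c + T e b z)
      = (int (T e b c) + int (T e b z0) - int z0) - (int z - int z0 - int m) + int z"
    using Tz by simp
  ultimately have dvd: "n dvd T e b c + T e b z" by (metis dvd_add dvd_diff int_dvd_int_iff)
  have digits: "k * b ^ c * n ^ e + c = z * b ^ c + c" unfolding k by (simp add: ac_simps)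
  have "T e b (k * b ^ c * n ^ e + c) = T e b z + T e b c"
    unfolding digits by (rule T_concat[OF less_base_power])
  then show ?thesis using dvd unfolding n_def by (metis add.commute)
qed

lemma coalescent_add:
  assumes "0 < d"
  shows "coalescent u (u + d)"
proof -
  have "d < b ^ d" by (rule less_base_power)
  define c where "c = T e b (b ^ d - d) - 1"
  obtain j where "(b - 1) dvd T e b (j * (b - 1) ^ e + c)"
    using exists_T_dvd_pred by blast
  define N where "N = j * (b - 1) ^ e + c"
  have dvd_N: "(b - 1) dvd T e b N" unfolding N_def by fact
  define K where "K = d + j"
  have "0 < T e b (b ^ d - d)" using T_pos \<open>d < b ^ d\<close> by simp
  then have T_K: "T e b (b ^ K - d) = N + 1"
    unfolding K_def N_def c_def using T_base_power_add_minus[OF assms] by simp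
  have "b ^ d \<le> b ^ K" unfolding K_def using base_ge_2 by (simp add: power_increasing)
  then have "d \<le> b ^ K" using \<open>d < b ^ d\<close> by linarith
  \<comment> \<open>Adding \<open>d\<close> to \<open>x\<close> turns its last \<open>K\<close> digits into the single leading digit of \<open>b ^ K\<close>.\<close>
  define x where "x = u * b ^ Suc K + (b ^ K - d)"
  have "b ^ K < b ^ Suc K" using base_ge_2 by simp
  then have "b ^ K - d < b ^ Suc K" by linarith
  then have "T e b x = T e b u + T e b (b ^ K - d)" unfolding x_def by (rule T_concat)
  then have T_x: "T e b x = (T e b u + 1) + N" using T_K by simp
  have digits: "x + d = u * b ^ Suc K + b ^ K" unfolding x_def using \<open>d \<le> b ^ K\<close> by simp
  have "T e b (x + d) = T e b u + T e b (b ^ K)"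
    unfolding digits using \<open>b ^ K < b ^ Suc K\<close> by (rule T_concat)
  then have T_x_d: "T e b (x + d) = T e b u + 1" using T_base_power by simp
  have "coalescent (T e b x) (T e b (x + d))"
    unfolding T_x T_x_d by (rule coalescent_sym[OF coalescent_add_if_dvd_T[OF dvd_N]])
  moreover have "u \<le> x" unfolding x_def using le_mult_base_power trans_le_add1 by blast
  ultimately show ?thesis using coalescent_add_if_coalescent_T by blast
qed

lemma coalescent_all: "coalescent u v"
proof (cases u v rule: linorder_cases)
  case less
  then show ?thesis using coalescent_add[of "v - u" u] by simp
next
  case greater
  then show ?thesis using coalescent_add[of "u - v" v] coalescent_sym by simp
qed (simp add: coalescent.refl)

lemma has_happy_translate_finite: "finite C \<Longrightarrow> has_happy_translate C"
proof (induction "card C" arbitrary: C rule: less_induct)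
  case less
  show ?case
  proof (cases "card C \<le> 1")
    case True
    then show ?thesis using has_happy_translate_card_le_1 less.prems by blast
  next
    case False
    then obtain u v where "u \<in> C" "v \<in> C" "u \<noteq> v"
      using card_le_Suc0_iff_eq[OF less.prems] by auto
    then show ?thesis
      using has_happy_translate_if_coalescent[OF coalescent_all less.prems] less.hyps by blast
  qed
qed

end

end

theorem theorem1p1:
  fixes e b :: nat
  assumes "e \<ge> 1" and "b \<ge> 2"
    and "\<forall>p. prime p \<and> p dvd (b - 1) \<longrightarrow> \<not> [e = 1] (mod (p - 1))"
  shows "\<forall>m::nat. m > 0 \<longrightarrow> (\<exists>l::nat. l > 0 \<and> (\<forall>i\<in>{1..m}. happy e b (l + i)))"
proof (intro allI impI)
  fix m :: nat
  interpret digit_power_sum e b using assms(1,2) by unfold_locales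
  have "has_happy_translate {1..m}" using has_happy_translate_finite[OF assms(3)] by simp
  then show "\<exists>l>0. \<forall>i\<in>{1..m}. happy e b (l + i)" unfolding has_happy_translate_def .
qed

end
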